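(* Let $G$ be a finite connected unweighted graph with graph distance $d$, fix a vertex $r$, and let $(a.b)_r=\tfrac12(d(a,r)+d(b,r)-d(a,b))$. For distinct vertices $x,y$ let $f(x,y)=\max_{x=w_1,\dots,w_k=y}\min_{1\le i\le k-1}(w_i.w_{i+1})_r$ (maximum over all finite vertex sequences from $x$ to $y$), and set $f(x,x)=d(x,r)$. Define $d'(x,y)=d(x,r)+d(y,r)-2f(x,y)$ and $(x.y)'_r=\tfrac12\big(d'(x,r)+d'(y,r)-d'(x,y)\big)$. Then: (1) $(x.y)'_r=f(x,y)$ for all vertices $x,y$; (2) $d'(x,y)=0$ (i.e. $x$ and $y$ are mapped to the same vertex of Gromov's distance approximating tree) if and only if $d(x,r)=d(y,r)=m$ for some $m$ and there exists a path $x=w_1,w_2,\dots,w_p=y$ in $G$ such that $d(w_i,r)\ge m$ for all $i$ and $\max\{d(w_i,r),d(w_{i+1},r)\}>m$ for all $1\le i\le p-1$.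
   Context: Gromov's distance approximating tree identifies two vertices $x,y$ of $G$ exactly when $d'(x,y)=0$, where $d'$ is as defined in the claim. *)

theory Defs
  imports Complex_Main
begin

definition simple_graph :: "'a set \<Rightarrow> ('a \<Rightarrow> 'a \<Rightarrow> bool) \<Rightarrow> bool" where
  "simple_graph V E \<longleftrightarrow> finite V \<and> (\<forall>x y. E x y \<longrightarrow> x \<in> V \<and> y \<in> V)
     \<and> (\<forall>x y. E x y \<longrightarrow> E y x) \<and> (\<forall>x. \<not> E x x)"

definition walk :: "'a set \<Rightarrow> ('a \<Rightarrow> 'a \<Rightarrow> bool) \<Rightarrow> 'a list \<Rightarrow> bool" where
  "walk V E ws \<longleftrightarrow> ws \<noteq> [] \<and> set ws \<subseteq> V \<and> (\<forall>i. Suc i < length ws \<longrightarrow> E (ws ! i) (ws ! Suc i))"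

definition connected_graph :: "'a set \<Rightarrow> ('a \<Rightarrow> 'a \<Rightarrow> bool) \<Rightarrow> bool" where
  "connected_graph V E \<longleftrightarrow> V \<noteq> {} \<and>
     (\<forall>x\<in>V. \<forall>y\<in>V. \<exists>ws. walk V E ws \<and> hd ws = x \<and> last ws = y)"

definition gdist :: "'a set \<Rightarrow> ('a \<Rightarrow> 'a \<Rightarrow> bool) \<Rightarrow> 'a \<Rightarrow> 'a \<Rightarrow> nat" where
  "gdist V E x y = (LEAST n. \<exists>ws. walk V E ws \<and> hd ws = x \<and> last ws = y \<and> length ws = Suc n)"

definition gprod :: "'a set \<Rightarrow> ('a \<Rightarrow> 'a \<Rightarrow> bool) \<Rightarrow> 'a \<Rightarrow> 'a \<Rightarrow> 'a \<Rightarrow> real" where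
  "gprod V E r a b = (real (gdist V E a r) + real (gdist V E b r) - real (gdist V E a b)) / 2"

definition fmaxmin :: "'a set \<Rightarrow> ('a \<Rightarrow> 'a \<Rightarrow> bool) \<Rightarrow> 'a \<Rightarrow> 'a \<Rightarrow> 'a \<Rightarrow> real" where
  "fmaxmin V E r x y =
     (if x = y then real (gdist V E x r)
      else Max {Min {gprod V E r (ws ! i) (ws ! Suc i) | i. Suc i < length ws} | ws.
                 set ws \<subseteq> V \<and> 2 \<le> length ws \<and> hd ws = x \<and> last ws = y})"

definition dprime :: "'a set \<Rightarrow> ('a \<Rightarrow> 'a \<Rightarrow> bool) \<Rightarrow> 'a \<Rightarrow> 'a \<Rightarrow> 'a \<Rightarrow> real" where
  "dprime V E r x y = real (gdist V E x r) + real (gdist V E y r) - 2 * fmaxmin V E r x y"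

definition gprod' :: "'a set \<Rightarrow> ('a \<Rightarrow> 'a \<Rightarrow> bool) \<Rightarrow> 'a \<Rightarrow> 'a \<Rightarrow> 'a \<Rightarrow> real" where
  "gprod' V E r x y = (dprime V E r x r + dprime V E r y r - dprime V E r x y) / 2"

end

theory Submission
  imports Defs
begin

text \<open>
  Every Gromov product along a sequence is at most the distances of its endpoints to the root,
  and the products vanish at the root; hence \<open>f(x,r) = 0\<close>, so \<open>d'(x,r) = d(x,r)\<close> and
  \<open>(x.y)'\<^sub>r = f(x,y)\<close>. As \<open>f(x,y) \<le> min(d(x,r), d(y,r))\<close>, \<open>d'(x,y) = 0\<close> means
  \<open>d(x,r) = d(y,r) = f(x,y) = m\<close>. The level \<open>m\<close> is reached by \<open>f\<close> exactly when \<open>x\<close> and \<open>y\<close> are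
  joined by a walk staying at distance \<open>\<ge> m\<close> from \<open>r\<close> whose edges never join two vertices at
  distance exactly \<open>m\<close>: an edge \<open>ab\<close> of such a walk has \<open>(a.b)\<^sub>r \<ge> m\<close>, and conversely a
  geodesic from \<open>a\<close> to \<open>b\<close> with \<open>(a.b)\<^sub>r \<ge> m\<close> is such a walk, so a sequence realising \<open>f\<close> can be
  filled in by geodesics.
\<close>

subsection \<open>Walks\<close>

lemma successively_append_tl:
  assumes "successively P xs" "successively P ys" "xs \<noteq> []" "last xs = hd ys"
  shows "successively P (xs @ tl ys)"
proof (cases ys)
  case (Cons y ys')
  then show ?thesis using assms
    by (auto simp: successively_append_iff successively_Cons split: list.splits)
qed (use assms in simp)

lemma walk_iff_successively: "walk V E ws \<longleftrightarrow> ws \<noteq> [] \<and> set ws \<subseteq> V \<and> successively E ws"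
  unfolding walk_def successively_conv_nth by blast

lemma walk_join:
  assumes "walk V E ws" "walk V E vs" "last ws = hd vs"
  shows "walk V E (ws @ tl vs)" "hd (ws @ tl vs) = hd ws" "last (ws @ tl vs) = last vs"
proof -
  have ne: "ws \<noteq> []" "vs \<noteq> []" using assms by (auto simp: walk_def)
  then have "set (ws @ tl vs) \<subseteq> set ws \<union> set vs" by (cases vs) auto
  then show "walk V E (ws @ tl vs)"
    using assms ne successively_append_tl[of E ws vs] by (auto simp: walk_iff_successively)
  show "hd (ws @ tl vs) = hd ws" using ne by simp
  show "last (ws @ tl vs) = last vs" using ne assms(3) by (cases vs) auto
qed

lemma walk_singleton: "x \<in> V \<Longrightarrow> walk V E [x]"
  by (simp add: walk_def)

lemma gdist_le_walk_length:
  assumes "walk V E ws"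
  shows "gdist V E (hd ws) (last ws) \<le> length ws - 1"
proof -
  have "length ws = Suc (length ws - 1)" using assms by (cases ws) (auto simp: walk_def)
  with assms show ?thesis unfolding gdist_def by (blast intro: Least_le)
qed

lemma gdist_walk_prefix_suffix:
  assumes "walk V E ws" "t < length ws"
  shows "gdist V E (hd ws) (ws ! t) \<le> t" "gdist V E (ws ! t) (last ws) \<le> length ws - 1 - t"
proof -
  have "walk V E (take (Suc t) ws)" "walk V E (drop t ws)"
    using assms by (auto simp: walk_def dest: in_set_takeD in_set_dropD)
  note bounds = this[THEN gdist_le_walk_length]
  have "hd (take (Suc t) ws) = hd ws" using assms(2) by (cases ws) auto
  moreover have "last (take (Suc t) ws) = ws ! t" "hd (drop t ws) = ws ! t" "last (drop t ws) = last ws"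
    using assms(2) by (auto simp: take_Suc_conv_app_nth hd_drop_conv_nth)
  ultimately show "gdist V E (hd ws) (ws ! t) \<le> t" "gdist V E (ws ! t) (last ws) \<le> length ws - 1 - t"
    using bounds assms(2) by simp_all
qed

subsection \<open>Graph distance\<close>

locale connected_simple_graph =
  fixes V :: "'a set" and E :: "'a \<Rightarrow> 'a \<Rightarrow> bool"
  assumes simple: "simple_graph V E" and connected: "connected_graph V E"
begin

lemma finite_vertices: "finite V"
  using simple by (simp add: simple_graph_def)

lemma edge_sym: "E a b \<Longrightarrow> E b a"
  using simple by (simp add: simple_graph_def)

lemma edge_vertices: "E a b \<Longrightarrow> a \<in> V \<and> b \<in> V"
  using simple by (simp add: simple_graph_def)

lemma shortest_walk_exists:
  assumes "x \<in> V" "y \<in> V"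
  obtains ws where "walk V E ws" "hd ws = x" "last ws = y" "length ws = Suc (gdist V E x y)"
proof -
  obtain ws where "walk V E ws" "hd ws = x" "last ws = y"
    using connected assms unfolding connected_graph_def by blast
  then have "\<exists>n ws. walk V E ws \<and> hd ws = x \<and> last ws = y \<and> length ws = Suc n"
    by (metis length_0_conv not0_implies_Suc walk_def)
  from LeastI_ex[OF this] show ?thesis using that unfolding gdist_def by blast
qed

lemma gdist_self [simp]: "x \<in> V \<Longrightarrow> gdist V E x x = 0"
  using gdist_le_walk_length[OF walk_singleton[of x V E]] by simp

lemma gdist_eq_0_iff:
  assumes "x \<in> V" "y \<in> V"
  shows "gdist V E x y = 0 \<longleftrightarrow> x = y"
proof
  assume "gdist V E x y = 0"
  then obtain ws where "hd ws = x" "last ws = y" "length ws = 1"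
    using shortest_walk_exists assms by (metis One_nat_def)
  then show "x = y" by (auto simp: length_Suc_conv)
qed (use assms in simp)

lemma gdist_commute:
  assumes "x \<in> V" "y \<in> V"
  shows "gdist V E x y = gdist V E y x"
proof -
  have "gdist V E x y \<le> gdist V E y x" if xy: "x \<in> V" "y \<in> V" for x y
  proof -
    obtain ws where ws: "walk V E ws" "hd ws = y" "last ws = x" "length ws = Suc (gdist V E y x)"
      using shortest_walk_exists[OF xy(2,1)] by blast
    then have "walk V E (rev ws)"
      by (auto simp: walk_iff_successively edge_sym elim: successively_mono)
    from gdist_le_walk_length[OF this] show ?thesis using ws by (simp add: hd_rev last_rev)
  qed
  with assms show ?thesis by (simp add: le_antisym)
qed

lemma gdist_triangle:
  assumes "x \<in> V" "y \<in> V" "z \<in> V"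
  shows "gdist V E x z \<le> gdist V E x y + gdist V E y z"
proof -
  obtain ws where ws: "walk V E ws" "hd ws = x" "last ws = y" "length ws = Suc (gdist V E x y)"
    using shortest_walk_exists assms by blast
  obtain vs where vs: "walk V E vs" "hd vs = y" "last vs = z" "length vs = Suc (gdist V E y z)"
    using shortest_walk_exists assms by blast
  note join = walk_join[OF ws(1) vs(1)]
  from gdist_le_walk_length[OF join(1)] show ?thesis using join ws vs by simp
qed

lemma gdist_edge: "E a b \<Longrightarrow> gdist V E a b = 1"
proof -
  assume e: "E a b"
  then have ab: "a \<in> V" "b \<in> V" "a \<noteq> b"
    using edge_vertices simple by (auto simp: simple_graph_def)
  have "walk V E [a, b]" using e ab by (auto simp: walk_def less_Suc_eq)
  then have "gdist V E a b \<le> 1" using gdist_le_walk_length[of V E "[a, b]"] by simp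
  moreover have "gdist V E a b \<noteq> 0" using gdist_eq_0_iff ab by blast
  ultimately show ?thesis by simp
qed

end

subsection \<open>Gromov products and the max-min function\<close>

locale rooted_graph = connected_simple_graph +
  fixes r :: 'a
  assumes root_vertex: "r \<in> V"
begin

lemma gprod_le_gdist_left: "a \<in> V \<Longrightarrow> b \<in> V \<Longrightarrow> gprod V E r a b \<le> gdist V E a r"
  using gdist_triangle[of b a r] gdist_commute[of a b] root_vertex unfolding gprod_def by simp

lemma gprod_le_gdist_right: "a \<in> V \<Longrightarrow> b \<in> V \<Longrightarrow> gprod V E r a b \<le> gdist V E b r"
  using gdist_triangle[of a b r] root_vertex unfolding gprod_def by simp

lemma gprod_root_right: "a \<in> V \<Longrightarrow> gprod V E r a r = 0"
  using root_vertex unfolding gprod_def by simp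

lemma edge_gprod_ge:
  assumes "E a b" "m \<le> gdist V E a r" "m \<le> gdist V E b r"
    "m < max (gdist V E a r) (gdist V E b r)"
  shows "real m \<le> gprod V E r a b"
proof -
  have "2 * m + 1 \<le> gdist V E a r + gdist V E b r" using assms(2-4) by linarith
  then have "real (2 * m + 1) \<le> real (gdist V E a r + gdist V E b r)" by (simp only: of_nat_le_iff)
  then show ?thesis using gdist_edge[OF assms(1)] unfolding gprod_def by simp
qed

definition min_gprod :: "'a list \<Rightarrow> real" where
  "min_gprod ws = Min {gprod V E r (ws ! i) (ws ! Suc i) | i. Suc i < length ws}"

lemma finite_consecutive_gprods: "finite {gprod V E r (ws ! i) (ws ! Suc i) | i. Suc i < length ws}"
  by (rule finite_image_set) (rule finite_subset[of _ "{..<length ws}"], auto)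

lemma consecutive_gprods_nonempty:
  "2 \<le> length ws \<Longrightarrow> {gprod V E r (ws ! i) (ws ! Suc i) | i. Suc i < length ws} \<noteq> {}"
  by (subgoal_tac "Suc 0 < length ws") auto

lemma min_gprod_le: "Suc i < length ws \<Longrightarrow> min_gprod ws \<le> gprod V E r (ws ! i) (ws ! Suc i)"
  unfolding min_gprod_def by (rule Min_le[OF finite_consecutive_gprods]) blast

lemma le_min_gprod_iff:
  "2 \<le> length ws \<Longrightarrow> c \<le> min_gprod ws \<longleftrightarrow> successively (\<lambda>a b. c \<le> gprod V E r a b) ws"
  unfolding min_gprod_def successively_conv_nth
  using finite_consecutive_gprods consecutive_gprods_nonempty by (subst Min_ge_iff) auto

lemma min_gprod_pair: "min_gprod [a, b] = gprod V E r a b"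
  using min_gprod_le[of 0 "[a, b]"] le_min_gprod_iff[of "[a, b]" "gprod V E r a b"] by simp

lemma min_gprod_le_gdist:
  assumes "set ws \<subseteq> V" "2 \<le> length ws"
  shows "min_gprod ws \<le> gdist V E (hd ws) r" "min_gprod ws \<le> gdist V E (last ws) r"
proof -
  let ?k = "length ws - 2"
  have ne: "ws \<noteq> []" and k: "Suc ?k = length ws - 1" "Suc ?k < length ws" using assms(2) by auto
  have "min_gprod ws \<le> gprod V E r (hd ws) (ws ! Suc 0)"
    using min_gprod_le[of 0 ws] assms(2) ne by (simp add: hd_conv_nth)
  also have "\<dots> \<le> gdist V E (hd ws) r"
    using assms ne by (intro gprod_le_gdist_left) (auto intro: nth_mem)
  finally show "min_gprod ws \<le> gdist V E (hd ws) r" .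
  have "min_gprod ws \<le> gprod V E r (ws ! ?k) (last ws)"
    using min_gprod_le[OF k(2)] ne k(1) by (simp add: last_conv_nth)
  also have "\<dots> \<le> gdist V E (last ws) r"
    using assms ne by (intro gprod_le_gdist_right) (auto intro: nth_mem)
  finally show "min_gprod ws \<le> gdist V E (last ws) r" .
qed

abbreviation sequences_between :: "'a \<Rightarrow> 'a \<Rightarrow> 'a list set" where
  "sequences_between x y \<equiv> {ws. set ws \<subseteq> V \<and> 2 \<le> length ws \<and> hd ws = x \<and> last ws = y}"

lemma fmaxmin_eq_Max:
  "x \<noteq> y \<Longrightarrow> fmaxmin V E r x y = Max (min_gprod ` sequences_between x y)"
  unfolding fmaxmin_def min_gprod_def by (simp add: image_def) (rule arg_cong[where f = Max], blast)

lemma finite_min_gprod_values: "finite (min_gprod ` sequences_between x y)"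
proof (rule finite_subset)
  show "finite ((\<lambda>(a, b). gprod V E r a b) ` (V \<times> V))" using finite_vertices by simp
  show "min_gprod ` sequences_between x y \<subseteq> (\<lambda>(a, b). gprod V E r a b) ` (V \<times> V)"
  proof
    fix v assume "v \<in> min_gprod ` sequences_between x y"
    then obtain ws where ws: "set ws \<subseteq> V" "2 \<le> length ws" "v = min_gprod ws" by blast
    have "v \<in> {gprod V E r (ws ! i) (ws ! Suc i) | i. Suc i < length ws}"
      unfolding ws(3) min_gprod_def
      using finite_consecutive_gprods consecutive_gprods_nonempty[OF ws(2)] by (rule Min_in)
    then obtain i where i: "Suc i < length ws" "v = gprod V E r (ws ! i) (ws ! Suc i)" by blast
    then have "(ws ! i, ws ! Suc i) \<in> V \<times> V" using ws(1) nth_mem[of i ws] nth_mem[of "Suc i" ws] by auto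
    then show "v \<in> (\<lambda>(a, b). gprod V E r a b) ` (V \<times> V)" using i(2) by force
  qed
qed

lemma min_gprod_le_fmaxmin: "x \<noteq> y \<Longrightarrow> ws \<in> sequences_between x y \<Longrightarrow> min_gprod ws \<le> fmaxmin V E r x y"
  unfolding fmaxmin_eq_Max by (rule Max_ge[OF finite_min_gprod_values]) blast

lemma fmaxmin_attained:
  assumes "x \<noteq> y" "x \<in> V" "y \<in> V"
  obtains ws where "ws \<in> sequences_between x y" "fmaxmin V E r x y = min_gprod ws"
proof -
  have "[x, y] \<in> sequences_between x y" using assms by simp
  then have "min_gprod ` sequences_between x y \<noteq> {}" by blast
  from Max_in[OF finite_min_gprod_values this] show ?thesis
    using that unfolding fmaxmin_eq_Max[OF assms(1)] by blast
qed

lemma fmaxmin_le_gdist: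
  assumes "x \<in> V" "y \<in> V"
  shows "fmaxmin V E r x y \<le> gdist V E x r" "fmaxmin V E r x y \<le> gdist V E y r"
proof (atomize (full), cases "x = y")
  case False
  then obtain ws where "ws \<in> sequences_between x y" "fmaxmin V E r x y = min_gprod ws"
    using fmaxmin_attained assms by blast
  then show "fmaxmin V E r x y \<le> gdist V E x r \<and> fmaxmin V E r x y \<le> gdist V E y r"
    using min_gprod_le_gdist[of ws] by auto
qed (simp add: fmaxmin_def)

lemma fmaxmin_root: "x \<in> V \<Longrightarrow> fmaxmin V E r x r = 0"
proof (cases "x = r")
  case False
  assume x: "x \<in> V"
  have "min_gprod [x, r] \<le> fmaxmin V E r x r"
    using False x root_vertex by (intro min_gprod_le_fmaxmin) auto
  then show ?thesis
    using fmaxmin_le_gdist(2)[OF x root_vertex] min_gprod_pair gprod_root_right[OF x] root_vertex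
    by simp
qed (simp add: fmaxmin_def root_vertex)

lemma gprod'_eq_fmaxmin: "x \<in> V \<Longrightarrow> y \<in> V \<Longrightarrow> gprod' V E r x y = fmaxmin V E r x y"
  by (simp add: gprod'_def dprime_def fmaxmin_root root_vertex)

lemma dprime_eq_0_iff:
  assumes "x \<in> V" "y \<in> V"
  shows "dprime V E r x y = 0 \<longleftrightarrow> gdist V E x r = gdist V E y r \<and> gdist V E x r \<le> fmaxmin V E r x y"
  using fmaxmin_le_gdist[OF assms] unfolding dprime_def by linarith

subsection \<open>Walks above a level\<close>

definition above_level :: "nat \<Rightarrow> 'a list \<Rightarrow> bool" where
  "above_level m ws \<longleftrightarrow> (\<forall>w\<in>set ws. m \<le> gdist V E w r)
     \<and> successively (\<lambda>u v. m < max (gdist V E u r) (gdist V E v r)) ws"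

lemma above_level_join:
  assumes "above_level m ws" "above_level m vs" "ws \<noteq> []" "last ws = hd vs"
  shows "above_level m (ws @ tl vs)"
proof -
  have "set (ws @ tl vs) \<subseteq> set ws \<union> set vs" by (cases vs) auto
  then show ?thesis using assms successively_append_tl[of _ ws vs] unfolding above_level_def by blast
qed

lemma geodesic_above_level:
  assumes "a \<in> V" "b \<in> V" "real m \<le> gprod V E r a b"
  obtains W where "walk V E W" "hd W = a" "last W = b" "above_level m W"
proof -
  let ?n = "gdist V E a b" and ?h = "\<lambda>w. gdist V E w r"
  obtain W where W: "walk V E W" "hd W = a" "last W = b" "length W = Suc ?n"
    using shortest_walk_exists assms by blast
  have "real (2 * m + ?n) \<le> real (?h a + ?h b)" using assms(3) unfolding gprod_def by simp
  then have level: "2 * m + ?n \<le> ?h a + ?h b" by (simp only: of_nat_le_iff)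
  have far: "?h a + ?h b + (t - s) \<le> ?n + ?h (W ! s) + ?h (W ! t)" if "s \<le> t" "t < length W" for s t
  proof -
    have V: "W ! s \<in> V" "W ! t \<in> V"
      using W(1) that nth_mem[of s W] nth_mem[of t W] by (auto simp: walk_def)
    have "?h a \<le> s + ?h (W ! s)"
      using gdist_triangle[of a "W ! s" r] gdist_walk_prefix_suffix(1)[OF W(1), of s] V assms W(2) that
        root_vertex by simp
    moreover have "?h b \<le> (?n - t) + ?h (W ! t)"
      using gdist_triangle[of b "W ! t" r] gdist_walk_prefix_suffix(2)[OF W(1) that(2)]
        gdist_commute[of b "W ! t"] V assms W(3,4) root_vertex by simp
    ultimately show ?thesis using that W(4) by linarith
  qed
  have "m \<le> ?h w" if w: "w \<in> set W" for w
  proof -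
    obtain t where "t < length W" "w = W ! t" using w by (auto simp: in_set_conv_nth)
    then have "?h a + ?h b \<le> ?n + 2 * ?h w" using far[of t t] by simp
    then show ?thesis using level by linarith
  qed
  moreover have "m < max (?h (W ! i)) (?h (W ! Suc i))" if "Suc i < length W" for i
  proof -
    have "?h a + ?h b + 1 \<le> ?n + ?h (W ! i) + ?h (W ! Suc i)" using far[of i "Suc i"] that by simp
    then show ?thesis using level by linarith
  qed
  then have "successively (\<lambda>u v. m < max (?h u) (?h v)) W"
    unfolding successively_conv_nth by blast
  ultimately show ?thesis using that W by (simp add: above_level_def)
qed

lemma chain_above_level:
  assumes "set ws \<subseteq> V" "ws \<noteq> []" "successively (\<lambda>a b. real m \<le> gprod V E r a b) ws"
    "m \<le> gdist V E (hd ws) r"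
  shows "\<exists>W. walk V E W \<and> hd W = hd ws \<and> last W = last ws \<and> above_level m W"
  using assms(2,1,3,4)
proof (induction ws rule: list_nonempty_induct)
  case (single x)
  then show ?case by (intro exI[of _ "[x]"]) (simp add: walk_singleton above_level_def)
next
  case (cons x xs)
  then have xb: "x \<in> V" "hd xs \<in> V" and m: "real m \<le> gprod V E r x (hd xs)"
    by (auto simp: neq_Nil_conv)
  obtain vs where vs: "walk V E vs" "hd vs = hd xs" "last vs = last xs" "above_level m vs"
    using cons m gprod_le_gdist_right[OF xb] by (auto simp: neq_Nil_conv)
  obtain ws where ws: "walk V E ws" "hd ws = x" "last ws = hd xs" "above_level m ws"
    using geodesic_above_level[OF xb m] by blast
  have "ws \<noteq> []" using ws(1) by (simp add: walk_def)
  then show ?case using walk_join[OF ws(1) vs(1)] above_level_join[OF ws(4) vs(4)] ws vs cons(1)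
    by (intro exI[of _ "ws @ tl vs"]) simp
qed

lemma le_fmaxmin_iff_above_level_walk:
  assumes "x \<in> V" "y \<in> V"
  shows "real m \<le> fmaxmin V E r x y \<longleftrightarrow> (\<exists>W. walk V E W \<and> hd W = x \<and> last W = y \<and> above_level m W)"
proof (cases "x = y")
  case True
  then show ?thesis using assms
    by (auto simp: fmaxmin_def above_level_def walk_def intro!: exI[of _ "[x]"])
next
  case False
  show ?thesis
  proof
    assume m: "real m \<le> fmaxmin V E r x y"
    obtain ws where ws: "ws \<in> sequences_between x y" "fmaxmin V E r x y = min_gprod ws"
      using fmaxmin_attained False assms by blast
    then have "successively (\<lambda>a b. real m \<le> gprod V E r a b) ws"
      using m le_min_gprod_iff by simp
    moreover have "m \<le> gdist V E x r" using m fmaxmin_le_gdist(1)[OF assms] by linarith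
    moreover have "ws \<noteq> []" using ws(1) by auto
    ultimately show "\<exists>W. walk V E W \<and> hd W = x \<and> last W = y \<and> above_level m W"
      using chain_above_level[of ws m] ws(1) by auto
  next
    assume "\<exists>W. walk V E W \<and> hd W = x \<and> last W = y \<and> above_level m W"
    then obtain W where W: "walk V E W" "hd W = x" "last W = y" "above_level m W" by blast
    have "2 \<le> length W" using W False by (cases W rule: remdups_adj.cases) (auto simp: walk_def)
    moreover have "real m \<le> gprod V E r (W ! i) (W ! Suc i)" if "Suc i < length W" for i
    proof (rule edge_gprod_ge)
      show "E (W ! i) (W ! Suc i)" using W(1) that by (simp add: walk_def)
      show "m < max (gdist V E (W ! i) r) (gdist V E (W ! Suc i) r)"
        using W(4) that by (simp add: above_level_def successively_conv_nth)
      show "m \<le> gdist V E (W ! i) r" "m \<le> gdist V E (W ! Suc i) r"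
        using W(4) that nth_mem[of i W] nth_mem[of "Suc i" W] by (simp_all add: above_level_def)
    qed
    ultimately have "real m \<le> min_gprod W" by (simp add: le_min_gprod_iff successively_conv_nth)
    also have "\<dots> \<le> fmaxmin V E r x y"
      using W False \<open>2 \<le> length W\<close> by (intro min_gprod_le_fmaxmin) (auto simp: walk_def)
    finally show "real m \<le> fmaxmin V E r x y" .
  qed
qed

end

theorem mainTheorem2:
  fixes V :: "'a set" and E :: "'a \<Rightarrow> 'a \<Rightarrow> bool" and r :: 'a
  assumes "simple_graph V E" and "connected_graph V E" and "r \<in> V"
  shows "(\<forall>x\<in>V. \<forall>y\<in>V. gprod' V E r x y = fmaxmin V E r x y)
    \<and> (\<forall>x\<in>V. \<forall>y\<in>V. dprime V E r x y = 0 \<longleftrightarrow>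
         (\<exists>m. gdist V E x r = m \<and> gdist V E y r = m \<and>
            (\<exists>ws. walk V E ws \<and> hd ws = x \<and> last ws = y \<and>
               (\<forall>w\<in>set ws. gdist V E w r \<ge> m) \<and>
               (\<forall>i. Suc i < length ws \<longrightarrow>
                    max (gdist V E (ws ! i) r) (gdist V E (ws ! Suc i) r) > m))))"
proof -
  interpret rooted_graph V E r
    using assms by unfold_locales
  show ?thesis
  proof (intro conjI ballI)
    fix x y assume xy: "x \<in> V" "y \<in> V"
    then show "gprod' V E r x y = fmaxmin V E r x y" by (rule gprod'_eq_fmaxmin)
    show "dprime V E r x y = 0 \<longleftrightarrow>
         (\<exists>m. gdist V E x r = m \<and> gdist V E y r = m \<and>
            (\<exists>ws. walk V E ws \<and> hd ws = x \<and> last ws = y \<and>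
               (\<forall>w\<in>set ws. gdist V E w r \<ge> m) \<and>
               (\<forall>i. Suc i < length ws \<longrightarrow>
                    max (gdist V E (ws ! i) r) (gdist V E (ws ! Suc i) r) > m)))"
      unfolding dprime_eq_0_iff[OF xy] le_fmaxmin_iff_above_level_walk[OF xy]
        above_level_def successively_conv_nth by auto
  qed
qed

end
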